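(* Let $\sigma$ be a confined position on the complete bipartite graph $K_{a,b}$ with sides $L$ ($|L|=a$) and $R$ ($|R|=b$). If $v,w\in L$ satisfy $\sigma(v)\le\sigma(w)$, then for all $t\ge 0$, $u_t(\sigma,v)\le u_t(\sigma,w)\le u_t(\sigma,v)+1$.
   Context: Parallel chip-firing game: on a graph $G$, a position $\sigma$ assigns a nonnegative integer $\sigma(v)$ to each vertex. Writing $\Phi_\sigma(v)$ for the number of neighbors $w$ of $v$ with $\sigma(w)\ge\deg(w)$, the step operator is $U\sigma(v)=\sigma(v)+\Phi_\sigma(v)$ if $\sigma(v)\le \deg(v)-1$ and $U\sigma(v)=\sigma(v)+\Phi_\sigma(v)-\deg(v)$ otherwise. A position is confined if every vertex satisfies $\Phi_\sigma(v)\le\sigma(v)\le\Phi_\sigma(v)+\deg(v)-1$. In $K_{a,b}$, every vertex of $L$ is adjacent exactly to all vertices of $R$ (degree $b$) and vice versa (degree $a$). $u_t(\sigma,v)=|\{s: 0\le s<t,\ U^s\sigma(v)\ge\deg(v)\}|$. *)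

theory Defs
  imports Main
begin

text \<open>A graph is given by a finite vertex set V and an adjacency relation E
(symmetric, irreflexive). Positions are functions vertex to nat (only values on V matter).\<close>

definition deg :: "'a set \<Rightarrow> ('a \<Rightarrow> 'a \<Rightarrow> bool) \<Rightarrow> 'a \<Rightarrow> nat" where
  "deg V E v = card {w \<in> V. E v w}"

definition Phi :: "'a set \<Rightarrow> ('a \<Rightarrow> 'a \<Rightarrow> bool) \<Rightarrow> ('a \<Rightarrow> nat) \<Rightarrow> 'a \<Rightarrow> nat" where
  "Phi V E \<sigma> v = card {w \<in> V. E v w \<and> \<sigma> w \<ge> deg V E w}"

definition step :: "'a set \<Rightarrow> ('a \<Rightarrow> 'a \<Rightarrow> bool) \<Rightarrow> ('a \<Rightarrow> nat) \<Rightarrow> ('a \<Rightarrow> nat)" where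
  "step V E \<sigma> = (\<lambda>v. if \<sigma> v + 1 \<le> deg V E v then \<sigma> v + Phi V E \<sigma> v
                       else \<sigma> v + Phi V E \<sigma> v - deg V E v)"

definition confined :: "'a set \<Rightarrow> ('a \<Rightarrow> 'a \<Rightarrow> bool) \<Rightarrow> ('a \<Rightarrow> nat) \<Rightarrow> bool" where
  "confined V E \<sigma> = (\<forall>v\<in>V. Phi V E \<sigma> v \<le> \<sigma> v \<and> \<sigma> v + 1 \<le> Phi V E \<sigma> v + deg V E v)"

definition fires :: "'a set \<Rightarrow> ('a \<Rightarrow> 'a \<Rightarrow> bool) \<Rightarrow> nat \<Rightarrow> ('a \<Rightarrow> nat) \<Rightarrow> 'a \<Rightarrow> nat" where
  "fires V E t \<sigma> v = card {s. s < t \<and> ((step V E) ^^ s) \<sigma> v \<ge> deg V E v}"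

definition Kab_adj :: "'a set \<Rightarrow> 'a set \<Rightarrow> 'a \<Rightarrow> 'a \<Rightarrow> bool" where
  "Kab_adj L R x y = ((x \<in> L \<and> y \<in> R) \<or> (x \<in> R \<and> y \<in> L))"

end

theory Submission
  imports Defs
begin

(* The statement has nothing to do with bipartiteness as such:
   two vertices v, w of L have the same neighbourhood R, so for every position they
   see the same number \<Phi> of firing neighbours and have the same degree b.  For such
   "twin" vertices the parallel dynamics only ever adds the same amount \<Phi> to both, and
   subtracts b from whichever one fires.  Writing d = \<sigma>(w) - \<sigma>(v) < b, induction on
   time shows that at every step either both have fired equally often and w is ahead
   by d, or w has fired once more and is behind by b - d. *)

lemma fires_Suc:
  "fires V E (Suc t) \<sigma> x =
     fires V E t \<sigma> x + (if ((step V E) ^^ t) \<sigma> x \<ge> deg V E x then 1 else 0)"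
proof -
  let ?P = "\<lambda>s. ((step V E) ^^ s) \<sigma> x \<ge> deg V E x"
  have "{s. s < Suc t \<and> ?P s} = {s. s < t \<and> ?P s} \<union> (if ?P t then {t} else {})"
    using less_Suc_eq by auto
  then show ?thesis unfolding fires_def by (auto simp: card_insert_if)
qed

definition twins :: "'a set \<Rightarrow> ('a \<Rightarrow> 'a \<Rightarrow> bool) \<Rightarrow> 'a \<Rightarrow> 'a \<Rightarrow> bool" where
  "twins V E v w = ({u \<in> V. E v u} = {u \<in> V. E w u})"

lemma twins_deg: "twins V E v w \<Longrightarrow> deg V E w = deg V E v"
  unfolding twins_def deg_def by simp

lemma twins_Phi:
  assumes "twins V E v w"
  shows "Phi V E \<tau> w = Phi V E \<tau> v"
proof -
  have "{u \<in> V. E v u \<and> deg V E u \<le> \<tau> u} = {u \<in> V. E w u \<and> deg V E u \<le> \<tau> u}"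
    using assms unfolding twins_def by blast
  then show ?thesis unfolding Phi_def by simp
qed

lemma twins_invariant:
  assumes tw: "twins V E v w" and le: "\<sigma> v \<le> \<sigma> w" and gap: "\<sigma> w < \<sigma> v + deg V E v"
  defines "f s \<equiv> ((step V E) ^^ s) \<sigma>" and "F s \<equiv> fires V E s \<sigma>"
    and "d \<equiv> \<sigma> w - \<sigma> v" and "b \<equiv> deg V E v"
  shows "(F s w = F s v \<and> f s w = f s v + d) \<or> (F s w = F s v + 1 \<and> f s w + b = f s v + d)"
proof (induction s)
  case 0
  show ?case using le by (simp add: F_def f_def fires_def d_def)
next
  case (Suc s)
  have F_Suc: "F (Suc s) x = F s x + (if f s x \<ge> deg V E x then 1 else 0)" for x
    unfolding F_def f_def by (rule fires_Suc)
  have f_Suc: "f (Suc s) x = (if f s x + 1 \<le> deg V E x then f s x + Phi V E (f s) x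
                              else f s x + Phi V E (f s) x - deg V E x)" for x
    unfolding f_def by (simp add: step_def)
  have "d < b" using le gap unfolding d_def b_def by linarith
  then show ?case
    using Suc.IH unfolding F_Suc f_Suc twins_Phi[OF tw] twins_deg[OF tw] b_def[symmetric]
    by (auto split: if_splits)
qed

lemma twins_fires_bounds:
  assumes "twins V E v w" and "\<sigma> v \<le> \<sigma> w" and "\<sigma> w < \<sigma> v + deg V E v"
  shows "fires V E t \<sigma> v \<le> fires V E t \<sigma> w \<and> fires V E t \<sigma> w \<le> fires V E t \<sigma> v + 1"
  using twins_invariant[OF assms, of t] by auto

lemma confined_twins_gap:
  assumes "confined V E \<sigma>" and "twins V E v w" and "v \<in> V" and "w \<in> V"
  shows "\<sigma> w < \<sigma> v + deg V E v"
proof -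
  have "Phi V E \<sigma> v \<le> \<sigma> v" and "\<sigma> w + 1 \<le> Phi V E \<sigma> w + deg V E w"
    using assms(1,3,4) unfolding confined_def by auto
  then show ?thesis using twins_Phi[OF assms(2), of \<sigma>] twins_deg[OF assms(2)] by linarith
qed

lemma Kab_left_twins:
  assumes "L \<inter> R = {}" and "v \<in> L" and "w \<in> L"
  shows "twins (L \<union> R) (Kab_adj L R) v w"
proof -
  have "{u \<in> L \<union> R. Kab_adj L R x u} = R" if "x \<in> L" for x
    using assms(1) that by (auto simp: Kab_adj_def)
  then show ?thesis unfolding twins_def using assms(2,3) by simp
qed

theorem lemma3p1:
  fixes L R :: "'a set" and \<sigma> :: "'a \<Rightarrow> nat" and v w :: 'a and t :: nat
  assumes "finite L" and "finite R" and "L \<inter> R = {}"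
    and "confined (L \<union> R) (Kab_adj L R) \<sigma>"
    and "v \<in> L" and "w \<in> L" and "\<sigma> v \<le> \<sigma> w"
  shows "fires (L \<union> R) (Kab_adj L R) t \<sigma> v \<le> fires (L \<union> R) (Kab_adj L R) t \<sigma> w
       \<and> fires (L \<union> R) (Kab_adj L R) t \<sigma> w \<le> fires (L \<union> R) (Kab_adj L R) t \<sigma> v + 1"
proof -
  have tw: "twins (L \<union> R) (Kab_adj L R) v w"
    using Kab_left_twins assms(3,5,6) .
  have "\<sigma> w < \<sigma> v + deg (L \<union> R) (Kab_adj L R) v"
    using confined_twins_gap[OF assms(4) tw] assms(5,6) by blast
  then show ?thesis using twins_fires_bounds[OF tw assms(7)] by blast
qed

end
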